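(* Let $\mathcal{U}$ be a finite set, $\mathbf{a} \in \mathbb{Z}_{\geq 0}^{\mathcal{U}}$ with $F_1 = \sum_{i\in\mathcal{U}} \mathbf{a}_i > 0$, let $k > 0$ with $HH(k) = |\{i \in \mathcal{U} : \mathbf{a}_i \geq F_1/k\}| \geq 1$, let $h$ be a positive integer and $\delta \in (0,1)$. Let $f : \mathcal{U} \to [h]$ be a uniformly random function and \[ \tilde k = \big|\{ j \in [h] : \exists\, i \in f^{-1}(j) \text{ with } \mathbf{a}_i \geq F_1/k \}\big| . \] Then with probability at least $1-\delta$, \[ \frac{\tilde k}{HH(k)} \geq 1 - \frac{k}{\delta h}. \]
   Context: $[h] = \{1,\dots,h\}$. A uniformly random function assigns each element of $\mathcal{U}$ an independent uniform value in $[h]$. *)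

theory Defs
  imports "HOL-Probability.Probability"
begin

definition F1 :: "'a set \<Rightarrow> ('a \<Rightarrow> nat) \<Rightarrow> nat" where
  "F1 U a = (\<Sum>i\<in>U. a i)"

definition heavy :: "'a set \<Rightarrow> ('a \<Rightarrow> nat) \<Rightarrow> real \<Rightarrow> 'a set" where
  "heavy U a k = {i \<in> U. real (a i) \<ge> real (F1 U a) / k}"

definition HH :: "'a set \<Rightarrow> ('a \<Rightarrow> nat) \<Rightarrow> real \<Rightarrow> nat" where
  "HH U a k = card (heavy U a k)"

definition ktilde :: "'a set \<Rightarrow> ('a \<Rightarrow> nat) \<Rightarrow> real \<Rightarrow> nat \<Rightarrow> ('a \<Rightarrow> nat) \<Rightarrow> nat" where
  "ktilde U a k h f = card {j \<in> {1..h}. \<exists>i \<in> heavy U a k. f i = j}"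

definition unif_fun :: "'a set \<Rightarrow> nat \<Rightarrow> ('a \<Rightarrow> nat) pmf" where
  "unif_fun U h = pmf_of_set (U \<rightarrow>\<^sub>E {1..h})"

end

theory Submission
  imports Defs
begin

text \<open>Every heavy hitter has weight at least \<open>F\<^sub>1/k\<close>, so there are at most \<open>k\<close> of them.
  A heavy hitter that does not get a bucket of its own is the first component of a colliding
  ordered pair of heavy hitters, so \<open>HH(k) - k\<tilde>\<close> is at most the number of such pairs, whose
  expectation is \<open>HH(k)(HH(k) - 1)/h \<le> HH(k) k/h\<close>. Markov's inequality bounds the
  probability that the pairs number at least \<open>HH(k) k/(\<delta> h)\<close> by \<open>\<delta>\<close>.\<close>

definition collisions :: "('a \<Rightarrow> 'b) \<Rightarrow> 'a set \<Rightarrow> ('a \<times> 'a) set" where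
  "collisions f H = {(i, j) \<in> H \<times> H. i \<noteq> j \<and> f i = f j}"

lemma card_heavy_le:
  assumes "finite U" and "F1 U a > 0" and "k > 0"
  shows "real (card (heavy U a k)) \<le> k"
proof -
  have "real (card (heavy U a k)) * (real (F1 U a) / k) = (\<Sum>i\<in>heavy U a k. real (F1 U a) / k)"
    by simp
  also have "\<dots> \<le> (\<Sum>i\<in>heavy U a k. real (a i))"
    by (intro sum_mono) (simp add: heavy_def)
  also have "\<dots> \<le> (\<Sum>i\<in>U. real (a i))"
    using assms(1) by (intro sum_mono2) (auto simp: heavy_def)
  also have "\<dots> = real (F1 U a)"
    by (simp add: F1_def)
  finally show ?thesis
    using assms(2,3) by (simp add: field_simps)
qed

lemma card_PiE_coincide:
  assumes "i \<in> U" and "j \<in> U" and "i \<noteq> j"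
  shows "card ((U \<rightarrow>\<^sub>E B) \<inter> {f. f i = f j}) = card ((U - {i}) \<rightarrow>\<^sub>E B)"
proof (rule bij_betw_same_card, rule bij_betw_byWitness[where f' = "\<lambda>g. g(i := g j)"])
  show "\<forall>f\<in>(U \<rightarrow>\<^sub>E B) \<inter> {f. f i = f j}. (f(i := undefined))(i := (f(i := undefined)) j) = f"
    using assms(3) by (auto simp: fun_eq_iff)
  show "\<forall>g\<in>(U - {i}) \<rightarrow>\<^sub>E B. (g(i := g j))(i := undefined) = g"
    by (auto simp: fun_eq_iff PiE_def extensional_def)
  show "(\<lambda>f. f(i := undefined)) ` ((U \<rightarrow>\<^sub>E B) \<inter> {f. f i = f j}) \<subseteq> (U - {i}) \<rightarrow>\<^sub>E B"
    by (auto simp: PiE_def extensional_def Pi_def)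
  show "(\<lambda>g. g(i := g j)) ` ((U - {i}) \<rightarrow>\<^sub>E B) \<subseteq> (U \<rightarrow>\<^sub>E B) \<inter> {f. f i = f j}"
    using assms by (auto simp: PiE_def extensional_def)
qed

lemma prob_coincide_pmf_of_set_PiE:
  assumes "finite U" and "finite B" and "B \<noteq> {}"
    and "i \<in> U" and "j \<in> U" and "i \<noteq> j"
  shows "measure_pmf.prob (pmf_of_set (U \<rightarrow>\<^sub>E B)) {f. f i = f j} = 1 / real (card B)"
proof -
  have "card (U \<rightarrow>\<^sub>E B) = card B * card ((U - {i}) \<rightarrow>\<^sub>E B)"
    using assms(1,4) by (metis card_funcsetE card_Suc_Diff1 finite_Diff power_Suc)
  then show ?thesis
    using assms card_PiE_coincide[OF assms(4-6), of B]
    by (simp add: measure_pmf_of_set PiE_eq_empty_iff finite_PiE)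
qed

lemma card_le_card_image_plus_card_collisions:
  assumes "finite H"
  shows "card H \<le> card (f ` H) + card (collisions f H)"
proof -
  define S where "S = fst ` collisions f H"
  have "collisions f H \<subseteq> H \<times> H"
    by (auto simp: collisions_def)
  then have "finite (collisions f H)"
    using assms by (simp add: finite_subset)
  then have "finite S" and "card S \<le> card (collisions f H)"
    by (simp_all add: S_def card_image_le)
  have "inj_on f (H - S)"
    unfolding inj_on_def S_def collisions_def by (force simp: image_iff)
  then have "card (H - S) \<le> card (f ` H)"
    using assms by (metis card_image card_mono finite_imageI Diff_subset image_mono)
  have "card H \<le> card ((H - S) \<union> S)"
    using assms \<open>finite S\<close> by (intro card_mono) auto
  also have "\<dots> \<le> card (H - S) + card S"
    by (rule card_Un_le)
  finally show ?thesis
    using \<open>card S \<le> _\<close> \<open>card (H - S) \<le> _\<close> by linarith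
qed

lemma card_off_diagonal:
  assumes "finite H"
  shows "card {(i, j) \<in> H \<times> H. i \<noteq> j} = card H * (card H - 1)"
proof -
  have "{(i, j) \<in> H \<times> H. i \<noteq> j} = H \<times> H - (\<lambda>i. (i, i)) ` H"
    by auto
  moreover have "card ((\<lambda>i. (i, i)) ` H) = card H"
    by (simp add: card_image inj_on_def)
  ultimately show ?thesis
    using assms by (simp add: card_Diff_subset card_cartesian_product image_subset_iff diff_mult_distrib2)
qed

lemma expectation_card_collisions:
  assumes "finite U" and "H \<subseteq> U" and "finite B" and "B \<noteq> {}"
  shows "measure_pmf.expectation (pmf_of_set (U \<rightarrow>\<^sub>E B)) (\<lambda>f. real (card (collisions f H)))
           = real (card H * (card H - 1)) / real (card B)"
proof -
  define P where "P = {(i, j) \<in> H \<times> H. i \<noteq> j}"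
  have "finite H"
    using assms(1,2) finite_subset by blast
  then have "finite P"
    by (intro finite_subset[of P "H \<times> H"]) (auto simp: P_def)
  have card_collisions: "real (card (collisions f H)) = (\<Sum>p\<in>P. indicator {g. g (fst p) = g (snd p)} f)" for f
  proof -
    have "collisions f H = {p \<in> P. f (fst p) = f (snd p)}"
      by (auto simp: collisions_def P_def)
    then show ?thesis
      using \<open>finite P\<close> by (simp add: indicator_def sum.If_cases Int_def)
  qed
  have "measure_pmf.expectation (pmf_of_set (U \<rightarrow>\<^sub>E B)) (\<lambda>f. real (card (collisions f H)))
      = (\<Sum>p\<in>P. measure_pmf.prob (pmf_of_set (U \<rightarrow>\<^sub>E B)) {g. g (fst p) = g (snd p)})"
    unfolding card_collisions
    by (subst Bochner_Integration.integral_sum) (auto intro: measure_pmf.integrable_const_bound[where B = 1])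
  also have "\<dots> = (\<Sum>p\<in>P. 1 / real (card B))"
    using assms by (intro sum.cong refl prob_coincide_pmf_of_set_PiE) (auto simp: P_def)
  also have "\<dots> = real (card H * (card H - 1)) / real (card B)"
    using card_off_diagonal[OF \<open>finite H\<close>] by (simp add: P_def)
  finally show ?thesis .
qed

lemma prob_card_collisions_ge:
  assumes "finite U" and "H \<subseteq> U" and "finite B" and "B \<noteq> {}" and "c > 0"
  shows "measure_pmf.prob (pmf_of_set (U \<rightarrow>\<^sub>E B)) {f. c \<le> real (card (collisions f H))}
           \<le> real (card H * (card H - 1)) / (real (card B) * c)"
proof -
  have "finite (set_pmf (pmf_of_set (U \<rightarrow>\<^sub>E B)))"
    using assms by (simp add: PiE_eq_empty_iff finite_PiE)
  then have integrable: "integrable (pmf_of_set (U \<rightarrow>\<^sub>E B)) (\<lambda>f. real (card (collisions f H)))"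
    by (rule integrable_measure_pmf_finite)
  have "measure_pmf.prob (pmf_of_set (U \<rightarrow>\<^sub>E B)) {f. c \<le> real (card (collisions f H))}
      \<le> measure_pmf.expectation (pmf_of_set (U \<rightarrow>\<^sub>E B)) (\<lambda>f. real (card (collisions f H))) / c"
    using integral_Markov_inequality_measure[OF integrable, of UNIV c] assms(5) by simp
  then show ?thesis
    by (simp add: expectation_card_collisions[OF assms(1-4)])
qed

lemma HH_le_ktilde_plus_card_collisions:
  assumes "finite U" and "f \<in> U \<rightarrow>\<^sub>E {1..h}"
  shows "HH U a k \<le> ktilde U a k h f + card (collisions f (heavy U a k))"
proof -
  have "heavy U a k \<subseteq> U"
    by (auto simp: heavy_def)
  then have "finite (heavy U a k)"
    using assms(1) by (rule finite_subset)
  moreover have "{j \<in> {1..h}. \<exists>i \<in> heavy U a k. f i = j} = f ` heavy U a k"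
    using assms(2) by (auto simp: heavy_def PiE_def Pi_def)
  ultimately show ?thesis
    using card_le_card_image_plus_card_collisions by (simp add: HH_def ktilde_def)
qed

lemma ktilde_ratio_ge_if_few_collisions:
  assumes "finite U" and "f \<in> U \<rightarrow>\<^sub>E {1..h}" and "HH U a k \<ge> 1"
    and "real (card (collisions f (heavy U a k))) < real (HH U a k) * t"
  shows "real (ktilde U a k h f) / real (HH U a k) \<ge> 1 - t"
proof -
  have "real (HH U a k) \<le> real (ktilde U a k h f) + real (card (collisions f (heavy U a k)))"
    using HH_le_ktilde_plus_card_collisions[OF assms(1,2), of a k] by simp
  then have "(1 - t) * real (HH U a k) \<le> real (ktilde U a k h f)"
    using assms(4) by (simp add: algebra_simps)
  then show ?thesis
    using assms(3) by (simp add: pos_le_divide_eq)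
qed

theorem lemma6:
  fixes U :: "'a set" and a :: "'a \<Rightarrow> nat" and k :: real and h :: nat and \<delta> :: real
  assumes "finite U"
    and "F1 U a > 0"
    and "k > 0"
    and "HH U a k \<ge> 1"
    and "h > 0"
    and "0 < \<delta>" and "\<delta> < 1"
  shows "measure_pmf.prob (unif_fun U h)
           {f. real (ktilde U a k h f) / real (HH U a k) \<ge> 1 - k / (\<delta> * real h)}
         \<ge> 1 - \<delta>"
proof -
  define M where "M = unif_fun U h"
  define m where "m = HH U a k"
  define t where "t = k / (\<delta> * real h)"
  define G where "G = {f. real (ktilde U a k h f) / real m \<ge> 1 - t}"
  define bad where "bad = {f :: 'a \<Rightarrow> nat. real m * t \<le> real (card (collisions f (heavy U a k)))}"
  have "m \<ge> 1" and "real m \<le> k" and "real m * t > 0"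
    using assms card_heavy_le[OF assms(1-3)] by (simp_all add: m_def HH_def t_def)
  have heavy_subset: "heavy U a k \<subseteq> U"
    by (auto simp: heavy_def)
  have set_M: "set_pmf M = U \<rightarrow>\<^sub>E {1..h}"
    using assms(1,5) by (simp add: M_def unif_fun_def PiE_eq_empty_iff finite_PiE)
  have "- G \<inter> set_pmf M \<subseteq> bad"
  proof
    fix f assume "f \<in> - G \<inter> set_pmf M"
    then have f: "f \<in> U \<rightarrow>\<^sub>E {1..h}" and "\<not> real (ktilde U a k h f) / real (HH U a k) \<ge> 1 - t"
      by (simp_all add: set_M G_def m_def)
    then show "f \<in> bad"
      unfolding bad_def m_def mem_Collect_eq
      using ktilde_ratio_ge_if_few_collisions[OF assms(1) f assms(4), where t = t] by linarith
  qed
  then have "measure_pmf.prob M (- G \<inter> set_pmf M) \<le> measure_pmf.prob M bad"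
    by (rule measure_pmf.finite_measure_mono) simp
  then have "measure_pmf.prob M (- G) \<le> measure_pmf.prob M bad"
    by (simp add: measure_Int_set_pmf)
  also have "\<dots> \<le> real m * real (m - 1) / (real h * (real m * t))"
    using prob_card_collisions_ge[OF assms(1) heavy_subset _ _ \<open>real m * t > 0\<close>, of "{1..h}"] assms(5)
    by (simp add: M_def unif_fun_def bad_def m_def HH_def)
  also have "\<dots> = \<delta> * real (m - 1) / k"
    using assms(3,5,6) \<open>m \<ge> 1\<close> by (simp add: t_def)
  also have "\<dots> \<le> \<delta>"
    using assms(3,6) \<open>real m \<le> k\<close> by (simp add: divide_le_eq)
  finally show ?thesis
    using measure_pmf.prob_compl[of G M] by (simp add: M_def G_def m_def t_def Compl_eq_Diff_UNIV)
qed

end
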